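(* Under the Setting below, for every $k\ge 0$ the iterates of Algorithm 1 satisfy $y^{k+1}\in X$, $\|y^{k+1}\|_0\le\|x^k\|_0$, $f(y^{k+1})\le f(x^k)$, and $$H(x^{k+1})+\frac{\mu}{2}\|x^{k+1}-y^{k+1}\|^2\le H(x^k).$$
   Context: Setting. Let $\lambda>0$, $l,u\in\mathbb{R}^n$ with $l\le u$ componentwise, $X=\{x\in\mathbb{R}^n: l\le x\le u\}$, and $\delta_X$ the indicator function of $X$ ($0$ on $X$, $+\infty$ outside). For $x\in\mathbb{R}^n$, $\|x\|_0$ is the number of nonzero components of $x$ and $I(x)=\{i: x_i=0\}$. Let $f:\mathbb{R}^n\to\mathbb{R}$ be convex and differentiable, bounded from below on $X$, with $\nabla f$ $L$-Lipschitz continuous on $X$ ($L>0$). Define $H(x)=\lambda\|x\|_0+f(x)+\delta_X(x)$. Algorithm 1. Choose $\mu>0$, extrapolation weights $0\le\omega_k\le\omega<1$, and a starting point $x^0\in X$; set $x^{-1}=x^0$. For $k=0,1,2,\dots$: define $y^{k+1}\in\mathbb{R}^n$ by $y^{k+1}_i=x^k_i+\omega_k(x^k_i-x^{k-1}_i)$ for $i\notin I(x^k)$ and $y^{k+1}_i=x^k_i\,(=0)$ for $i\in I(x^k)$ (extrapolation only on the support of $x^k$); if $\langle y^{k+1}-x^k,\nabla f(y^{k+1})\rangle>0$ or $y^{k+1}\notin X$, reset $y^{k+1}:=x^k$; then take any $$x^{k+1}\in\arg\min_{x\in X}\ \lambda\|x\|_0+\frac{L}{2}\Big\|x-y^{k+1}+\frac1L\nabla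 f(y^{k+1})\Big\|^2+\frac{\mu}{2}\|x-y^{k+1}\|^2 .$$ *)

theory Defs
  imports "HOL-Analysis.Analysis"
begin

definition l0norm :: "real^'n \<Rightarrow> nat" where
  "l0norm x = card {i. x $ i \<noteq> 0}"

definition box_set :: "real^'n \<Rightarrow> real^'n \<Rightarrow> (real^'n) set" where
  "box_set l u = {x. \<forall>i. l $ i \<le> x $ i \<and> x $ i \<le> u $ i}"

definition Hobj :: "real \<Rightarrow> (real^'n \<Rightarrow> real) \<Rightarrow> (real^'n) set \<Rightarrow> real^'n \<Rightarrow> ereal" where
  "Hobj lam f X x = (if x \<in> X then ereal (lam * real (l0norm x) + f x) else \<infinity>)"

definition extrap :: "real \<Rightarrow> real^'n \<Rightarrow> real^'n \<Rightarrow> real^'n" where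
  "extrap w xk xkm1 = (\<chi> i. if xk $ i \<noteq> 0 then xk $ i + w * (xk $ i - xkm1 $ i) else xk $ i)"

definition ynext :: "(real^'n \<Rightarrow> real^'n) \<Rightarrow> (real^'n) set \<Rightarrow> real \<Rightarrow> real^'n \<Rightarrow> real^'n \<Rightarrow> real^'n" where
  "ynext g X w xk xkm1 =
     (let yt = extrap w xk xkm1 in
      if inner (yt - xk) (g yt) > 0 \<or> yt \<notin> X then xk else yt)"

definition subobj :: "real \<Rightarrow> real \<Rightarrow> real \<Rightarrow> (real^'n \<Rightarrow> real^'n) \<Rightarrow> real^'n \<Rightarrow> real^'n \<Rightarrow> real" where
  "subobj lam L mu g y x =
     lam * real (l0norm x) + L / 2 * (norm (x - y + (1 / L) *\<^sub>R g y))\<^sup>2 + mu / 2 * (norm (x - y))\<^sup>2"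

end

theory Submission
  imports Defs
begin

(* The extrapolated point y_{k+1} is either x_k or a point of X with support inside that of x_k
   at which the derivative of f in the direction away from x_k is non-positive, so convexity of f
   gives f(y_{k+1}) <= f(x_k). Expanding the square in the subproblem, comparing its optimal value
   with its value at y_{k+1} and combining with the descent lemma for the L-Lipschitz gradient yields
     lam ||x_{k+1}||_0 + f(x_{k+1}) + mu/2 ||x_{k+1} - y_{k+1}||^2 <= lam ||y_{k+1}||_0 + f(y_{k+1}),
   and the right-hand side is at most H(x_k) by the two properties of y_{k+1}. *)

lemma box_set_eq_cbox: "box_set l u = cbox l u"
  by (auto simp: box_set_def mem_box_cart)

lemma has_real_derivative_along_line:
  fixes f :: "'a::real_inner \<Rightarrow> real"
  assumes grad: "\<And>z. (f has_derivative (\<lambda>h. inner (g z) h)) (at z)"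
  shows "((\<lambda>t. f (a + t *\<^sub>R d)) has_real_derivative inner (g (a + t *\<^sub>R d)) d) (at t within S)"
proof -
  have "((\<lambda>t. a + t *\<^sub>R d) has_derivative (\<lambda>s. s *\<^sub>R d)) (at t within S)"
    by (auto intro!: derivative_eq_intros)
  from has_derivative_compose[OF this grad]
  show ?thesis unfolding has_field_derivative_def
    by (rule has_derivative_eq_rhs) (auto simp: fun_eq_iff mult.commute)
qed

lemma convex_on_above_linearization:
  fixes f :: "'a::real_inner \<Rightarrow> real"
  assumes convex: "convex_on UNIV f"
    and grad: "\<And>z. (f has_derivative (\<lambda>h. inner (g z) h)) (at z)"
  shows "f a + inner (g a) (b - a) \<le> f b"
proof -
  define h where "h t = f (a + t *\<^sub>R (b - a))" for t
  have "convex_on UNIV h"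
  proof (rule convex_onI)
    fix t s r :: real
    assume "0 < t" "t < 1"
    have "a + ((1 - t) *\<^sub>R s + t *\<^sub>R r) *\<^sub>R (b - a)
          = (1 - t) *\<^sub>R (a + s *\<^sub>R (b - a)) + t *\<^sub>R (a + r *\<^sub>R (b - a))"
      by (simp add: algebra_simps)
    with convex_onD[OF convex, of t] \<open>0 < t\<close> \<open>t < 1\<close>
    show "h ((1 - t) *\<^sub>R s + t *\<^sub>R r) \<le> (1 - t) * h s + t * h r"
      unfolding h_def by simp
  qed simp
  moreover have "(h has_real_derivative inner (g a) (b - a)) (at 0)"
    unfolding h_def using has_real_derivative_along_line[OF grad, where a = a and t = 0 and d = "b - a" and S = UNIV]
    by simp
  ultimately have "inner (g a) (b - a) * (1 - 0) \<le> h 1 - h 0"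
    by (intro convex_on_imp_above_tangent) auto
  then show ?thesis by (simp add: h_def)
qed

lemma lipschitz_gradient_upper_bound:
  fixes f :: "'a::real_inner \<Rightarrow> real"
  assumes grad: "\<And>z. (f has_derivative (\<lambda>h. inner (g z) h)) (at z)"
    and "convex S" and lip: "L-lipschitz_on S g"
    and a: "a \<in> S" and b: "b \<in> S"
  shows "f b \<le> f a + inner (g a) (b - a) + L / 2 * (norm (b - a))\<^sup>2"
proof -
  define d where "d = b - a"
  define \<phi> where "\<phi> t = f (a + t *\<^sub>R d) - t * inner (g a) d - L / 2 * t\<^sup>2 * (norm d)\<^sup>2" for t
  have "\<phi> 1 \<le> \<phi> 0"
  proof (rule DERIV_nonpos_imp_nonincreasing[of 0 1 \<phi>])
    fix t :: real
    assume t: "0 \<le> t" "t \<le> 1"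
    define D where "D = inner (g (a + t *\<^sub>R d) - g a) d - L * t * (norm d)\<^sup>2"
    have "(\<phi> has_real_derivative D) (at t)"
      unfolding \<phi>_def D_def
      by (auto intro!: derivative_eq_intros has_real_derivative_along_line[OF grad]
          simp: inner_diff_left)
    moreover have "D \<le> 0"
    proof -
      have "a + t *\<^sub>R d \<in> S"
        using convexD_alt[OF \<open>convex S\<close> a b t] by (simp add: d_def algebra_simps)
      then have "norm (g (a + t *\<^sub>R d) - g a) \<le> L * norm (t *\<^sub>R d)"
        using lipschitz_onD[OF lip _ a, of "a + t *\<^sub>R d"] by (simp add: dist_norm)
      then have "inner (g (a + t *\<^sub>R d) - g a) d \<le> L * norm (t *\<^sub>R d) * norm d"
        by (meson norm_cauchy_schwarz mult_right_mono norm_ge_zero order_trans)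
      with t show ?thesis by (simp add: D_def power2_eq_square mult.assoc)
    qed
    ultimately show "\<exists>y. (\<phi> has_real_derivative y) (at t) \<and> y \<le> 0" by blast
  qed simp
  then show ?thesis unfolding \<phi>_def d_def by simp
qed

lemma l0norm_extrap_le: "l0norm (extrap w a b) \<le> l0norm a"
  unfolding l0norm_def extrap_def by (auto intro: card_mono)

lemma ynext_cases:
  obtains "ynext g X w a b = a"
  | "ynext g X w a b = extrap w a b" "extrap w a b \<in> X"
    "inner (extrap w a b - a) (g (extrap w a b)) \<le> 0"
  unfolding ynext_def Let_def by (metis not_less)

lemma ynext_mem: "a \<in> X \<Longrightarrow> ynext g X w a b \<in> X"
  by (cases rule: ynext_cases[of g X w a b]) auto

lemma l0norm_ynext_le: "l0norm (ynext g X w a b) \<le> l0norm a"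
  by (cases rule: ynext_cases[of g X w a b]) (auto intro: l0norm_extrap_le)

lemma ynext_non_ascent:
  fixes f :: "real^'n \<Rightarrow> real"
  assumes "convex_on UNIV f"
    and grad: "\<And>z. (f has_derivative (\<lambda>h. inner (g z) h)) (at z)"
  shows "f (ynext g X w a b) \<le> f a"
proof (cases rule: ynext_cases[of g X w a b])
  case 2
  let ?y = "extrap w a b"
  have "f ?y + inner (g ?y) (a - ?y) \<le> f a"
    by (rule convex_on_above_linearization[OF assms])
  moreover have "inner (g ?y) (a - ?y) = - inner (?y - a) (g ?y)"
    by (simp add: inner_commute inner_diff_left inner_diff_right)
  ultimately show ?thesis using 2 by simp
qed simp

lemma subobj_expand:
  assumes "L \<noteq> 0"
  shows "subobj lam L mu g y x = lam * real (l0norm x) + inner (g y) (x - y)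
           + (L + mu) / 2 * (norm (x - y))\<^sup>2 + (norm (g y))\<^sup>2 / (2 * L)"
proof -
  have "(norm (x - y + (1 / L) *\<^sub>R g y))\<^sup>2
        = (norm (x - y))\<^sup>2 + 2 / L * inner (g y) (x - y) + (norm (g y))\<^sup>2 / L\<^sup>2"
    unfolding power2_norm_eq_inner
    by (simp add: inner_add_left inner_add_right inner_commute power2_eq_square)
  then show ?thesis
    using assms unfolding subobj_def by (simp add: field_simps power2_eq_square)
qed

lemma subobj_sufficient_decrease:
  fixes f :: "real^'n \<Rightarrow> real"
  assumes grad: "\<And>z. (f has_derivative (\<lambda>h. inner (g z) h)) (at z)"
    and "convex S" and lip: "L-lipschitz_on S g" and "L > 0"
    and "x \<in> S" "y \<in> S"
    and opt: "subobj lam L mu g y x \<le> subobj lam L mu g y y"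
  shows "lam * real (l0norm x) + f x + mu / 2 * (norm (x - y))\<^sup>2 \<le> lam * real (l0norm y) + f y"
proof -
  have "lam * real (l0norm x) + inner (g y) (x - y) + (L + mu) / 2 * (norm (x - y))\<^sup>2
        \<le> lam * real (l0norm y)"
    using opt \<open>L > 0\<close> by (simp add: subobj_expand)
  moreover have "f x \<le> f y + inner (g y) (x - y) + L / 2 * (norm (x - y))\<^sup>2"
    by (rule lipschitz_gradient_upper_bound[OF grad \<open>convex S\<close> lip \<open>y \<in> S\<close> \<open>x \<in> S\<close>])
  ultimately show ?thesis by (simp add: field_simps)
qed

theorem mainTheorem2:
  fixes lam L mu \<omega> :: real
    and l u :: "real^'n"
    and f :: "real^'n \<Rightarrow> real"
    and g :: "real^'n \<Rightarrow> real^'n"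
    and w :: "nat \<Rightarrow> real"
    and x y :: "nat \<Rightarrow> real^'n"
  assumes lam_pos: "lam > 0"
    and lu: "\<forall>i. l $ i \<le> u $ i"
    and f_convex: "convex_on UNIV f"
    and f_grad: "\<forall>z. (f has_derivative (\<lambda>h. inner (g z) h)) (at z)"
    and f_bdd: "bdd_below (f ` box_set l u)"
    and L_pos: "L > 0"
    and g_lip: "\<forall>a\<in>box_set l u. \<forall>b\<in>box_set l u. norm (g a - g b) \<le> L * norm (a - b)"
    and mu_pos: "mu > 0"
    and w_bounds: "\<forall>k. 0 \<le> w k \<and> w k \<le> \<omega>"
    and om_lt1: "\<omega> < 1"
    and x0: "x 0 \<in> box_set l u"
    and y_def: "\<forall>k. y (k + 1) = ynext g (box_set l u) (w k) (x k)
                                   (if k = 0 then x 0 else x (k - 1))"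
    and x_step: "\<forall>k. x (k + 1) \<in> box_set l u \<and>
                   (\<forall>z\<in>box_set l u. subobj lam L mu g (y (k + 1)) (x (k + 1))
                                    \<le> subobj lam L mu g (y (k + 1)) z)"
  shows "\<forall>k. y (k + 1) \<in> box_set l u
            \<and> l0norm (y (k + 1)) \<le> l0norm (x k)
            \<and> f (y (k + 1)) \<le> f (x k)
            \<and> Hobj lam f (box_set l u) (x (k + 1))
                + ereal (mu / 2 * (norm (x (k + 1) - y (k + 1)))\<^sup>2)
              \<le> Hobj lam f (box_set l u) (x k)"
proof (intro allI)
  fix k
  let ?X = "box_set l u"
  have convex_X: "convex ?X" by (simp add: box_set_eq_cbox)
  have lip: "L-lipschitz_on ?X g"
    using g_lip L_pos by (auto intro: lipschitz_onI simp: dist_norm)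
  have x_mem: "x j \<in> ?X" for j
    using x0 x_step by (cases j) auto
  obtain x_prev where y_eq: "y (k + 1) = ynext g ?X (w k) (x k) x_prev"
    using y_def by blast
  have y_mem: "y (k + 1) \<in> ?X"
    unfolding y_eq by (rule ynext_mem[OF x_mem])
  have l0_y: "l0norm (y (k + 1)) \<le> l0norm (x k)"
    unfolding y_eq by (rule l0norm_ynext_le)
  have f_y: "f (y (k + 1)) \<le> f (x k)"
    unfolding y_eq by (rule ynext_non_ascent[OF f_convex f_grad[rule_format]])
  have "lam * real (l0norm (x (k + 1))) + f (x (k + 1)) + mu / 2 * (norm (x (k + 1) - y (k + 1)))\<^sup>2
        \<le> lam * real (l0norm (y (k + 1))) + f (y (k + 1))"
    using x_step y_mem
    by (intro subobj_sufficient_decrease[OF f_grad[rule_format] convex_X lip L_pos]) auto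
  moreover have "lam * real (l0norm (y (k + 1))) \<le> lam * real (l0norm (x k))"
    using l0_y lam_pos by simp
  ultimately show "y (k + 1) \<in> ?X \<and> l0norm (y (k + 1)) \<le> l0norm (x k) \<and> f (y (k + 1)) \<le> f (x k)
      \<and> Hobj lam f ?X (x (k + 1)) + ereal (mu / 2 * (norm (x (k + 1) - y (k + 1)))\<^sup>2)
        \<le> Hobj lam f ?X (x k)"
    using y_mem l0_y f_y x_mem[of k] x_mem[of "k + 1"] by (simp add: Hobj_def)
qed

end
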